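(* Let $k\ge 2$ and $n$ be integers with $2k-1 \le n$. Then $$N(BM,k,n) \le N(GM,k,n)\le (n-k+1)\cdot\mathsf{m}(k-1,n-1).$$
   Context: We are given $n$ balls, the set $[n]=\{1,\dots,n\}$, each colored with one of two colors by an unknown coloring. A ball $i$ is a majority ball if more than $n/2$ balls have the same color as $i$. A query is a subset $Q\subseteq[n]$ with $|Q|=k$. In the General (Yes-No) Model (GM), the answer to a query $Q$ is YES if $Q$ contains two balls of different colors and NO otherwise. In Borzyszkowski's Model (BM), the answer is YES together with a pair of balls of $Q$ having different colors (the pair may be any such pair) if such a pair exists, and NO if all balls of $Q$ have the same color. A non-adaptive strategy is a family of queries $Q_1,\dots,Q_q$ fixed in advance. It succeeds if for every coloring and every admissible sequence of answers, the answers determine the outcome: either every coloring consistent with the answers has no majority ball, or there is a ball that is a majority ball in every coloring consistent with the answers. $N(GM,k,n)$ and $N(BM,k,n)$ denote the minimum number of queries in a successful non-adaptive strategy in the respective model. A hypergraph has Property B if its vertices can be 2-colored with no monochromatic edge. For $k\ge1$ and $n\ge 2k-1$, $\mathsf{m}(k,n)$ is the minimum number of edges of a $k$-uniform hypergraph on $n$ vertices that does not have Property B. *)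

theory Defs
  imports Main
begin

text \<open>Balls are 1..n; a coloring is any function nat => bool (only values on 1..n matter).\<close>

definition balls :: "nat \<Rightarrow> nat set" where
  "balls n = {1..n}"

definition is_majority :: "nat \<Rightarrow> (nat \<Rightarrow> bool) \<Rightarrow> nat \<Rightarrow> bool" where
  "is_majority n c i \<longleftrightarrow> i \<in> balls n \<and> 2 * card {j \<in> balls n. c j = c i} > n"

definition has_majority :: "nat \<Rightarrow> (nat \<Rightarrow> bool) \<Rightarrow> bool" where
  "has_majority n c \<longleftrightarrow> (\<exists>i. is_majority n c i)"

text \<open>Outcome determined by a set C of colorings consistent with the answers.\<close>
definition determines :: "nat \<Rightarrow> (nat \<Rightarrow> bool) set \<Rightarrow> bool" where
  "determines n C \<longleftrightarrow> (\<forall>c\<in>C. \<not> has_majority n c) \<or> (\<exists>i. \<forall>c\<in>C. is_majority n c i)"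

definition valid_queries :: "nat \<Rightarrow> nat \<Rightarrow> nat set list \<Rightarrow> bool" where
  "valid_queries k n qs \<longleftrightarrow> (\<forall>Q\<in>set qs. Q \<subseteq> balls n \<and> card Q = k)"

definition gm_answer :: "(nat \<Rightarrow> bool) \<Rightarrow> nat set \<Rightarrow> bool" where
  "gm_answer c Q \<longleftrightarrow> (\<exists>a\<in>Q. \<exists>b\<in>Q. c a \<noteq> c b)"

definition gm_success :: "nat \<Rightarrow> nat set list \<Rightarrow> bool" where
  "gm_success n qs \<longleftrightarrow> (\<forall>c. determines n
      {c'. \<forall>i<length qs. gm_answer c' (qs ! i) = gm_answer c (qs ! i)})"

text \<open>Borzyszkowski's model: answer None (NO) or Some (a,b) (YES with a pair of differently
  colored balls of Q, chosen adversarially).\<close>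
definition bm_admissible :: "(nat \<Rightarrow> bool) \<Rightarrow> nat set \<Rightarrow> (nat \<times> nat) option \<Rightarrow> bool" where
  "bm_admissible c Q ans \<longleftrightarrow>
     (case ans of
        None \<Rightarrow> \<not> gm_answer c Q
      | Some (a, b) \<Rightarrow> a \<in> Q \<and> b \<in> Q \<and> c a \<noteq> c b)"

definition bm_success :: "nat \<Rightarrow> nat set list \<Rightarrow> bool" where
  "bm_success n qs \<longleftrightarrow> (\<forall>c (ans :: (nat \<times> nat) option list).
      length ans = length qs \<and> (\<forall>i<length qs. bm_admissible c (qs ! i) (ans ! i)) \<longrightarrow>
      determines n {c'. \<forall>i<length qs. bm_admissible c' (qs ! i) (ans ! i)})"

definition N_GM :: "nat \<Rightarrow> nat \<Rightarrow> nat" where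
  "N_GM k n = (LEAST q. \<exists>qs. length qs = q \<and> valid_queries k n qs \<and> gm_success n qs)"

definition N_BM :: "nat \<Rightarrow> nat \<Rightarrow> nat" where
  "N_BM k n = (LEAST q. \<exists>qs. length qs = q \<and> valid_queries k n qs \<and> bm_success n qs)"

definition property_B :: "nat set \<Rightarrow> nat set set \<Rightarrow> bool" where
  "property_B V E \<longleftrightarrow> (\<exists>f :: nat \<Rightarrow> bool. \<forall>e\<in>E. \<exists>a\<in>e. \<exists>b\<in>e. f a \<noteq> f b)"

definition mB :: "nat \<Rightarrow> nat \<Rightarrow> nat" where
  "mB k n = (LEAST m. \<exists>E. E \<subseteq> {e. e \<subseteq> {1..n} \<and> card e = k} \<and> card E = m
                       \<and> \<not> property_B {1..n} E)"

end

theory Submission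
  imports Defs
begin

text \<open>Take a \<open>(k-1)\<close>-uniform hypergraph \<open>E\<close> on the balls \<open>1..n-1\<close> without Property B
  having \<open>m(k-1,n-1)\<close> edges, and query \<open>F \<union> {x}\<close> for every edge \<open>F\<close> and each of the
  \<open>n-k+1\<close> balls \<open>x \<notin> F\<close>. If some query \<open>F \<union> {x}\<close> is answered NO, then \<open>F \<union> {y}\<close> is
  answered YES exactly when \<open>y\<close> and \<open>x\<close> have different colors, so the partition into color
  classes is known. If all queries are answered YES, a consistent coloring makes some edge \<open>F\<close>
  monochromatic (no Property B), and then all balls outside \<open>F\<close> share the other color; they
  are \<open>n-k+1 > n/2\<close> many and include ball \<open>n\<close>, which lies outside every edge.
  A BM answer determines the GM answer, so every GM strategy also succeeds in BM.\<close>

lemma determines_subset: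
  assumes "determines n C" and "D \<subseteq> C"
  shows "determines n D"
  using assms unfolding determines_def by blast

lemma gm_answer_eq_if_bm_admissible:
  assumes "bm_admissible c Q a" and "bm_admissible c' Q a"
  shows "gm_answer c' Q = gm_answer c Q"
proof (cases a)
  case None
  with assms show ?thesis unfolding bm_admissible_def by simp
next
  case (Some p)
  with assms show ?thesis by (cases p) (auto simp: bm_admissible_def gm_answer_def)
qed

lemma bm_success_if_gm_success:
  assumes "gm_success n qs"
  shows "bm_success n qs"
  unfolding bm_success_def
proof (intro allI impI)
  fix c :: "nat \<Rightarrow> bool" and ans :: "(nat \<times> nat) option list"
  assume "length ans = length qs \<and> (\<forall>i<length qs. bm_admissible c (qs ! i) (ans ! i))"
  then have "{c'. \<forall>i<length qs. bm_admissible c' (qs ! i) (ans ! i)}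
      \<subseteq> {c'. \<forall>i<length qs. gm_answer c' (qs ! i) = gm_answer c (qs ! i)}"
    using gm_answer_eq_if_bm_admissible by blast
  moreover have "determines n {c'. \<forall>i<length qs. gm_answer c' (qs ! i) = gm_answer c (qs ! i)}"
    using assms unfolding gm_success_def by blast
  ultimately show "determines n {c'. \<forall>i<length qs. bm_admissible c' (qs ! i) (ans ! i)}"
    by (rule determines_subset[rotated])
qed

lemma N_GM_le_length:
  assumes "valid_queries k n qs" and "gm_success n qs"
  shows "N_GM k n \<le> length qs"
  unfolding N_GM_def by (rule Least_le) (use assms in blast)

lemma N_BM_le_N_GM:
  assumes "valid_queries k n qs" and "gm_success n qs"
  shows "N_BM k n \<le> N_GM k n"
proof -
  have "\<exists>qs'. length qs' = N_GM k n \<and> valid_queries k n qs' \<and> gm_success n qs'"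
    unfolding N_GM_def by (rule LeastI) (use assms in blast)
  then show ?thesis
    unfolding N_BM_def by (intro Least_le) (blast intro: bm_success_if_gm_success)
qed

lemma is_majority_cong:
  assumes "\<forall>i\<in>balls n. \<forall>j\<in>balls n. (c' i = c' j) = (c i = c j)"
  shows "is_majority n c' i = is_majority n c i"
proof (cases "i \<in> balls n")
  case True
  with assms have "{j \<in> balls n. c' j = c' i} = {j \<in> balls n. c j = c i}" by auto
  then show ?thesis unfolding is_majority_def by simp
qed (simp add: is_majority_def)

lemma determines_if_same_partition:
  fixes c :: "nat \<Rightarrow> bool"
  assumes "\<forall>c'\<in>C. \<forall>i\<in>balls n. \<forall>j\<in>balls n. (c' i = c' j) = (c i = c j)"
  shows "determines n C"
proof -
  have "is_majority n c' i = is_majority n c i" if "c' \<in> C" for c' i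
    using assms that by (intro is_majority_cong) blast
  then show ?thesis
    unfolding determines_def has_majority_def by blast
qed

lemma gm_answer_insert_if_monochromatic:
  assumes "\<not> gm_answer c (insert x F)" and "f \<in> F"
  shows "gm_answer c (insert y F) \<longleftrightarrow> c y \<noteq> c x"
  using assms unfolding gm_answer_def by (metis insert_iff)

lemma is_majority_outside_monochromatic:
  assumes "F \<subseteq> balls n" and "F \<noteq> {}" and "2 * card F < n"
    and mono: "\<forall>a\<in>F. c a = b"
    and yes: "\<forall>y\<in>balls n - F. gm_answer c (insert y F)"
    and i: "i \<in> balls n - F"
  shows "is_majority n c i"
proof -
  obtain f where f: "f \<in> F" using \<open>F \<noteq> {}\<close> by blast
  have "\<not> gm_answer c (insert f F)"
    using mono f unfolding gm_answer_def by blast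
  then have other: "c y = (\<not> b)" if "y \<in> balls n - F" for y
    using gm_answer_insert_if_monochromatic[OF _ f, of c f y] yes that mono f by auto
  have "{j \<in> balls n. c j = c i} = balls n - F"
    using i mono by (auto simp: other)
  moreover have "card (balls n - F) = n - card F"
    using assms(1) by (simp add: card_Diff_subset finite_subset balls_def)
  ultimately show ?thesis
    using i assms(3) unfolding is_majority_def by simp
qed

definition extension_queries :: "nat \<Rightarrow> nat set set \<Rightarrow> nat set set" where
  "extension_queries n E = {insert x F | F x. F \<in> E \<and> x \<in> balls n - F}"

lemma same_partition_if_extension_answered_no:
  fixes c c' :: "nat \<Rightarrow> bool"
  assumes "F \<noteq> {}" and x: "x \<in> balls n - F" and no: "\<not> gm_answer c (insert x F)"
    and agree: "\<forall>y\<in>balls n - F. gm_answer c' (insert y F) = gm_answer c (insert y F)"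
  shows "\<forall>i\<in>balls n. \<forall>j\<in>balls n. (c' i = c' j) = (c i = c j)"
proof -
  obtain f where f: "f \<in> F" using \<open>F \<noteq> {}\<close> by blast
  have no': "\<not> gm_answer c' (insert x F)"
    using agree x no by simp
  have relative: "(c' y = c' x) = (c y = c x)" if "y \<in> balls n" for y
  proof (cases "y \<in> F")
    case True
    then have "c y = c x" "c' y = c' x"
      using no no' unfolding gm_answer_def by blast+
    then show ?thesis by simp
  next
    case False
    with that agree have "gm_answer c' (insert y F) = gm_answer c (insert y F)"
      by blast
    then show ?thesis
      using gm_answer_insert_if_monochromatic[OF no f, of y]
        gm_answer_insert_if_monochromatic[OF no' f, of y]
      by argo
  qed
  show ?thesis
  proof (intro ballI)
    fix i j assume "i \<in> balls n" "j \<in> balls n"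
    from relative[OF this(1)] relative[OF this(2)] show "(c' i = c' j) = (c i = c j)"
      by argo
  qed
qed

lemma is_majority_last_if_extensions_answered_yes:
  assumes E: "E \<subseteq> {F. F \<subseteq> {1..n-1} \<and> card F = j}" "\<not> property_B {1..n-1} E"
    and j: "1 \<le> j" "2 * j < n"
    and yes: "\<forall>Q\<in>extension_queries n E. gm_answer c Q"
  shows "is_majority n c n"
proof -
  have "\<exists>F\<in>E. \<forall>a\<in>F. \<forall>a'\<in>F. c a = c a'"
  proof (rule ccontr)
    assume "\<not> ?thesis"
    then have "property_B {1..n-1} E"
      unfolding property_B_def by (intro exI[of _ c]) blast
    with E(2) show False ..
  qed
  then obtain F where F: "F \<in> E" and mono: "\<forall>a\<in>F. \<forall>a'\<in>F. c a = c a'" ..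
  have "F \<subseteq> {1..n-1}" "card F = j" using F E(1) by auto
  with j have edge: "F \<subseteq> balls n" "F \<noteq> {}" "2 * card F < n" "n \<in> balls n - F"
    by (auto simp: balls_def subset_iff)
  then obtain f where "f \<in> F" by blast
  with mono have mono_f: "\<forall>a\<in>F. c a = c f" by blast
  have "\<forall>y\<in>balls n - F. gm_answer c (insert y F)"
    using yes F unfolding extension_queries_def by blast
  with is_majority_outside_monochromatic[OF edge(1-3) mono_f] edge(4) show ?thesis
    by blast
qed

lemma gm_success_extension_queries:
  assumes E: "E \<subseteq> {F. F \<subseteq> {1..n-1} \<and> card F = j}" "\<not> property_B {1..n-1} E"
    and j: "1 \<le> j" "2 * j < n"
    and qs: "set qs = extension_queries n E"
  shows "gm_success n qs"
  unfolding gm_success_def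
proof
  fix c
  let ?C = "{c'. \<forall>i<length qs. gm_answer c' (qs ! i) = gm_answer c (qs ! i)}"
  have consistent: "\<forall>Q\<in>extension_queries n E. gm_answer c' Q = gm_answer c Q" if "c' \<in> ?C" for c'
    using that unfolding qs[symmetric] by (simp add: all_set_conv_all_nth)
  show "determines n ?C"
  proof (cases "\<forall>Q\<in>extension_queries n E. gm_answer c Q")
    case True
    have "is_majority n c' n" if "c' \<in> ?C" for c'
    proof (rule is_majority_last_if_extensions_answered_yes[OF E j])
      show "\<forall>Q\<in>extension_queries n E. gm_answer c' Q"
        using True consistent[OF that] by blast
    qed
    then show ?thesis unfolding determines_def by blast
  next
    case False
    then obtain F x where F: "F \<in> E" and x: "x \<in> balls n - F"
      and no: "\<not> gm_answer c (insert x F)"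
      unfolding extension_queries_def by blast
    have "F \<noteq> {}" using F E(1) j by auto
    show ?thesis
    proof (rule determines_if_same_partition[where c = c], rule ballI)
      fix c' assume "c' \<in> ?C"
      then have "\<forall>y\<in>balls n - F. gm_answer c' (insert y F) = gm_answer c (insert y F)"
        using consistent F unfolding extension_queries_def by blast
      then show "\<forall>i\<in>balls n. \<forall>j\<in>balls n. (c' i = c' j) = (c i = c j)"
        by (rule same_partition_if_extension_answered_no[OF \<open>F \<noteq> {}\<close> x no])
    qed
  qed
qed

lemma extension_queries_list:
  assumes E: "E \<subseteq> {F. F \<subseteq> balls n \<and> card F = j}"
  obtains qs where "set qs = extension_queries n E" "length qs = (n - j) * card E"
    "valid_queries (Suc j) n qs"
proof -
  have "finite E"
    using E by (rule finite_subset) (auto intro: finite_subset[of _ "Pow (balls n)"] simp: balls_def)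
  then obtain es where es: "set es = E" "distinct es" using finite_distinct_list by blast
  define qs where
    "qs = concat (map (\<lambda>F. map (\<lambda>x. insert x F) (sorted_list_of_set (balls n - F))) es)"
  have set_qs: "set qs = extension_queries n E"
    unfolding qs_def extension_queries_def using es(1) by (auto simp: balls_def) blast
  have "length (sorted_list_of_set (balls n - F)) = n - j" if "F \<in> E" for F
    using that E by (auto simp: balls_def card_Diff_subset finite_subset)
  then have "length qs = sum_list (map (\<lambda>F. n - j) es)"
    unfolding qs_def length_concat map_map o_def using es(1)
    by (intro arg_cong[where f = sum_list] map_cong) auto
  moreover have "length es = card E"
    using es by (metis distinct_card)
  ultimately have "length qs = (n - j) * card E"
    by (simp add: sum_list_triv)
  moreover have "valid_queries (Suc j) n qs"
    unfolding valid_queries_def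
  proof
    fix Q assume "Q \<in> set qs"
    then obtain F x where "F \<in> E" "x \<in> balls n - F" "Q = insert x F"
      using set_qs unfolding extension_queries_def by blast
    with E show "Q \<subseteq> balls n \<and> card Q = Suc j"
      by (auto simp: balls_def finite_subset)
  qed
  ultimately show thesis
    using set_qs that by blast
qed

lemma not_property_B_complete:
  assumes "finite V" and "2 * j \<le> card V + 1"
  shows "\<not> property_B V {e. e \<subseteq> V \<and> card e = j}"
proof
  assume "property_B V {e. e \<subseteq> V \<and> card e = j}"
  then obtain f :: "nat \<Rightarrow> bool"
    where f: "\<And>e. e \<subseteq> V \<Longrightarrow> card e = j \<Longrightarrow> \<exists>a\<in>e. \<exists>a'\<in>e. f a \<noteq> f a'"
    unfolding property_B_def by blast
  have "card V = card ({x \<in> V. f x} \<union> {x \<in> V. \<not> f x})"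
    by (rule arg_cong[where f = card]) blast
  also have "\<dots> = card {x \<in> V. f x} + card {x \<in> V. \<not> f x}"
    using assms(1) by (intro card_Un_disjoint) auto
  finally have split: "card V = card {x \<in> V. f x} + card {x \<in> V. \<not> f x}" .
  obtain b where "j \<le> card {x \<in> V. f x = b}"
  proof (cases "j \<le> card {x \<in> V. f x}")
    case True
    then show ?thesis using that[of True] by simp
  next
    case False
    then have "j \<le> card {x \<in> V. \<not> f x}" using split assms(2) by linarith
    then show ?thesis using that[of False] by simp
  qed
  then obtain S where S: "S \<subseteq> {x \<in> V. f x = b}" "card S = j"
    by (meson obtain_subset_with_card_n)
  then obtain a a' where "a \<in> S" "a' \<in> S" "f a \<noteq> f a'"
    using f[of S] by blast
  with S(1) show False by blast
qed

lemma mB_attained: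
  assumes "2 * k \<le> n + 1"
  obtains E where "E \<subseteq> {e. e \<subseteq> {1..n} \<and> card e = k}" "card E = mB k n"
    "\<not> property_B {1..n} E"
proof -
  let ?K = "{e. e \<subseteq> {1..n} \<and> card e = k}"
  have "\<not> property_B {1..n} ?K"
    using assms by (intro not_property_B_complete) simp_all
  then have "\<exists>m E. E \<subseteq> ?K \<and> card E = m \<and> \<not> property_B {1..n} E"
    by blast
  from LeastI_ex[OF this] obtain E
    where "E \<subseteq> ?K" "card E = mB k n" "\<not> property_B {1..n} E"
    unfolding mB_def by blast
  then show thesis by (rule that)
qed

theorem theorem9:
  fixes k n :: nat
  assumes "2 \<le> k" and "2 * k - 1 \<le> n"
  shows "N_BM k n \<le> N_GM k n \<and> N_GM k n \<le> (n - k + 1) * mB (k - 1) (n - 1)"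
proof -
  obtain E where E: "E \<subseteq> {e. e \<subseteq> {1..n-1} \<and> card e = k - 1}"
    "card E = mB (k - 1) (n - 1)" "\<not> property_B {1..n-1} E"
    using mB_attained[of "k - 1" "n - 1"] assms by force
  moreover have "{1..n-1} \<subseteq> balls n"
    by (auto simp: balls_def)
  ultimately have "E \<subseteq> {F. F \<subseteq> balls n \<and> card F = k - 1}"
    by blast
  then obtain qs where qs: "set qs = extension_queries n E"
    "length qs = (n - (k - 1)) * card E" "valid_queries (Suc (k - 1)) n qs"
    by (rule extension_queries_list)
  have valid: "valid_queries k n qs"
    using qs(3) assms(1) by (simp add: Suc_diff_Suc numeral_2_eq_2 Suc_le_eq)
  have gm: "gm_success n qs"
    using gm_success_extension_queries[OF E(1,3) _ _ qs(1)] assms by simp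
  show ?thesis
    using N_BM_le_N_GM[OF valid gm] N_GM_le_length[OF valid gm] qs(2) E(2) assms
    by (simp add: Suc_diff_le)
qed

end
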